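(* For any optiongraphs $\mathsf{C}$ and $\mathsf{D}$, $(\mathsf{C}+\mathsf{D})/{\bowtie_{\mathsf{C}+\mathsf{D}}}\cong(\mathsf{C}/{\bowtie_\mathsf{C}}+\mathsf{D}/{\bowtie_\mathsf{D}})/{\bowtie_{\mathsf{E}}}$, where $\mathsf{E}:=\mathsf{C}/{\bowtie_\mathsf{C}}+\mathsf{D}/{\bowtie_\mathsf{D}}$.
   Context: An optiongraph is a nonempty set $\mathsf{D}$ of positions with an option function $\mathrm{Opt}_\mathsf{D}:\mathsf{D}\to 2^{\mathsf{D}}$. A map is option preserving if $\mathrm{Opt}_\mathsf{D}(f(p))=f(\mathrm{Opt}_\mathsf{C}(p))$; an isomorphism ($\cong$) is a bijective option-preserving map. For an equivalence relation $\theta$, $[p]_\theta$ is the class of $p$ and $[S]_\theta:=\{[s]_\theta\mid s\in S\}$; $\theta$ is a congruence relation if $p\mathrel{\theta}q$ implies $[\mathrm{Opt}(p)]_\theta=[\mathrm{Opt}(q)]_\theta$. The quotient $\mathsf{D}/\theta$ has positions the $\theta$-classes and $\mathrm{Opt}([p]_\theta):=[\mathrm{Opt}_\mathsf{D}(p)]_\theta$. For an optiongraph $\mathsf{X}$, $\bowtie_\mathsf{X}$ is the union of all congruence relations on $\mathsf{X}$ (the maximum congruence). The sum $\mathsf{C}+\mathsf{D}$ is the optiongraph on $\mathsf{C}\times\mathsf{D}$ with $\mathrm{Opt}_{\mathsf{C}+\mathsf{D}}(p,q):=(\mathrm{Opt}_\mathsf{C}(p)\times\{q\})\cup(\{p\}\times\mathrm{Opt}_\mathsf{D}(q))$.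 *)

theory Defs
  imports Main
begin

definition optiongraph :: "'a set \<Rightarrow> ('a \<Rightarrow> 'a set) \<Rightarrow> bool" where
  "optiongraph V Opt \<longleftrightarrow> V \<noteq> {} \<and> (\<forall>p\<in>V. Opt p \<subseteq> V)"

definition cls :: "'a rel \<Rightarrow> 'a \<Rightarrow> 'a set" where
  "cls \<theta> p = \<theta> `` {p}"

definition congruence_rel :: "'a set \<Rightarrow> ('a \<Rightarrow> 'a set) \<Rightarrow> 'a rel \<Rightarrow> bool" where
  "congruence_rel V Opt \<theta> \<longleftrightarrow> equiv V \<theta> \<and>
     (\<forall>p q. (p, q) \<in> \<theta> \<longrightarrow> cls \<theta> ` Opt p = cls \<theta> ` Opt q)"

definition maxcong :: "'a set \<Rightarrow> ('a \<Rightarrow> 'a set) \<Rightarrow> 'a rel" where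
  "maxcong V Opt = \<Union> {\<theta>. congruence_rel V Opt \<theta>}"

definition quot_pos :: "'a set \<Rightarrow> 'a rel \<Rightarrow> 'a set set" where
  "quot_pos V \<theta> = V // \<theta>"

definition quot_opt :: "('a \<Rightarrow> 'a set) \<Rightarrow> 'a rel \<Rightarrow> 'a set \<Rightarrow> 'a set set" where
  "quot_opt Opt \<theta> X = cls \<theta> ` Opt (SOME p. p \<in> X)"

definition sum_pos :: "'a set \<Rightarrow> 'b set \<Rightarrow> ('a \<times> 'b) set" where
  "sum_pos C D = C \<times> D"

definition sum_opt :: "('a \<Rightarrow> 'a set) \<Rightarrow> ('b \<Rightarrow> 'b set) \<Rightarrow> 'a \<times> 'b \<Rightarrow> ('a \<times> 'b) set" where
  "sum_opt OptC OptD pq = (OptC (fst pq) \<times> {snd pq}) \<union> ({fst pq} \<times> OptD (snd pq))"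

definition og_iso :: "'a set \<Rightarrow> ('a \<Rightarrow> 'a set) \<Rightarrow> 'b set \<Rightarrow> ('b \<Rightarrow> 'b set) \<Rightarrow> ('a \<Rightarrow> 'b) \<Rightarrow> bool" where
  "og_iso V1 Opt1 V2 Opt2 f \<longleftrightarrow> bij_betw f V1 V2 \<and> (\<forall>p\<in>V1. Opt2 (f p) = f ` Opt1 p)"

definition og_isomorphic :: "'a set \<Rightarrow> ('a \<Rightarrow> 'a set) \<Rightarrow> 'b set \<Rightarrow> ('b \<Rightarrow> 'b set) \<Rightarrow> bool" where
  "og_isomorphic V1 Opt1 V2 Opt2 \<longleftrightarrow> (\<exists>f. og_iso V1 Opt1 V2 Opt2 f)"

end

theory Submission
  imports Defs
begin

text \<open>The maximum congruence is bisimilarity: congruences are exactly the bisimulations that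
are equivalences, and the equivalence closure of a bisimulation is again one.
An option-preserving map pushes bisimulations forward and pulls them back, so it preserves
and reflects the maximum congruence; if it is surjective it therefore induces an isomorphism of
the quotients by the maximum congruences.  The theorem is the case of the map
\<open>(c, d) \<mapsto> ([c], [d])\<close> from \<open>C + D\<close> onto \<open>C/\<bowtie> + D/\<bowtie>\<close>.\<close>

definition bisimulation :: "'a set \<Rightarrow> ('a \<Rightarrow> 'a set) \<Rightarrow> 'a rel \<Rightarrow> bool" where
  "bisimulation V Opt R \<longleftrightarrow> R \<subseteq> V \<times> V \<and> (\<forall>p q. (p, q) \<in> R \<longrightarrow>
     (\<forall>x\<in>Opt p. \<exists>y\<in>Opt q. (x, y) \<in> R) \<and> (\<forall>y\<in>Opt q. \<exists>x\<in>Opt p. (x, y) \<in> R))"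

definition og_hom :: "'a set \<Rightarrow> ('a \<Rightarrow> 'a set) \<Rightarrow> 'b set \<Rightarrow> ('b \<Rightarrow> 'b set) \<Rightarrow> ('a \<Rightarrow> 'b) \<Rightarrow> bool" where
  "og_hom V1 Opt1 V2 Opt2 f \<longleftrightarrow> f ` V1 \<subseteq> V2 \<and> (\<forall>p\<in>V1. Opt2 (f p) = f ` Opt1 p)"

lemma bisimulation_converse:
  "bisimulation V Opt R \<Longrightarrow> bisimulation V Opt (R\<inverse>)"
  unfolding bisimulation_def by blast

lemma bisimulation_Id_on:
  "\<forall>p\<in>V. Opt p \<subseteq> V \<Longrightarrow> bisimulation V Opt (Id_on V)"
  unfolding bisimulation_def by blast

lemma bisimulation_Union:
  "(\<And>R. R \<in> \<R> \<Longrightarrow> bisimulation V Opt R) \<Longrightarrow> bisimulation V Opt (\<Union>\<R>)"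
  unfolding bisimulation_def by (auto 0 3 simp: Union_least) (meson UnionI)+

lemma bisimulation_trancl:
  assumes bis: "bisimulation V Opt R"
  shows "bisimulation V Opt (R\<^sup>+)"
proof -
  have "(\<forall>x\<in>Opt p. \<exists>y\<in>Opt q. (x, y) \<in> R\<^sup>+) \<and> (\<forall>y\<in>Opt q. \<exists>x\<in>Opt p. (x, y) \<in> R\<^sup>+)"
    if "(p, q) \<in> R\<^sup>+" for p q
    using that
  proof (induction rule: trancl_induct)
    case (base q)
    then show ?case using bis unfolding bisimulation_def by blast
  next
    case (step q r)
    have "\<forall>x\<in>Opt q. \<exists>y\<in>Opt r. (x, y) \<in> R" "\<forall>y\<in>Opt r. \<exists>x\<in>Opt q. (x, y) \<in> R"
      using step.hyps(2) bis unfolding bisimulation_def by blast+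
    with step.IH show ?case by (meson trancl_into_trancl)
  qed
  moreover have "R\<^sup>+ \<subseteq> V \<times> V"
    using bis trancl_subset_Sigma unfolding bisimulation_def by blast
  ultimately show ?thesis unfolding bisimulation_def by blast
qed

lemma congruence_rel_imp_bisimulation:
  assumes closed: "\<forall>p\<in>V. Opt p \<subseteq> V" and cong: "congruence_rel V Opt \<theta>"
  shows "bisimulation V Opt \<theta>"
proof -
  have equiv: "equiv V \<theta>" using cong unfolding congruence_rel_def by blast
  have forth: "\<forall>x\<in>Opt p. \<exists>y\<in>Opt q. (x, y) \<in> \<theta>" if pq: "(p, q) \<in> \<theta>" for p q
  proof
    fix x assume x: "x \<in> Opt p"
    have "cls \<theta> ` Opt p = cls \<theta> ` Opt q" using cong pq unfolding congruence_rel_def by blast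
    with x obtain y where y: "y \<in> Opt q" "cls \<theta> x = cls \<theta> y" by blast
    have "p \<in> V" "q \<in> V" using pq equiv equiv_type by blast+
    with x y closed have "x \<in> V" "y \<in> V" by blast+
    with y equiv have "(x, y) \<in> \<theta>" unfolding cls_def using eq_equiv_class_iff by fast
    with y show "\<exists>y\<in>Opt q. (x, y) \<in> \<theta>" by blast
  qed
  have sym: "(q, p) \<in> \<theta>" if "(p, q) \<in> \<theta>" for p q using that equiv by (meson equiv_def symD)
  have backward: "\<forall>y\<in>Opt q. \<exists>x\<in>Opt p. (x, y) \<in> \<theta>" if "(p, q) \<in> \<theta>" for p q
    using forth[OF sym[OF that]] sym by blast
  show ?thesis unfolding bisimulation_def using equiv_type[OF equiv] forth backward by blast
qed

lemma bisimulation_equiv_imp_congruence_rel: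
  assumes bis: "bisimulation V Opt \<theta>" and equiv: "equiv V \<theta>"
  shows "congruence_rel V Opt \<theta>"
proof -
  have cls_eq: "cls \<theta> x = cls \<theta> y" if "(x, y) \<in> \<theta>" for x y
    unfolding cls_def by (rule equiv_class_eq[OF equiv that])
  have "cls \<theta> ` Opt p \<subseteq> cls \<theta> ` Opt q" if pq: "(p, q) \<in> \<theta>" for p q
  proof
    fix c assume "c \<in> cls \<theta> ` Opt p"
    then obtain x where x: "x \<in> Opt p" "c = cls \<theta> x" by blast
    with bis pq obtain y where "y \<in> Opt q" "(x, y) \<in> \<theta>" unfolding bisimulation_def by blast
    with x cls_eq show "c \<in> cls \<theta> ` Opt q" by blast
  qed
  moreover have "(q, p) \<in> \<theta>" if "(p, q) \<in> \<theta>" for p q using that equiv by (meson equiv_def symD)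
  ultimately show ?thesis unfolding congruence_rel_def using equiv by blast
qed

lemma bisimulation_subset_maxcong:
  assumes closed: "\<forall>p\<in>V. Opt p \<subseteq> V" and bis: "bisimulation V Opt R"
  shows "R \<subseteq> maxcong V Opt"
proof -
  define R0 where "R0 = Id_on V \<union> R \<union> R\<inverse>"
  have "bisimulation V Opt (\<Union>{Id_on V, R, R\<inverse>})"
    by (rule bisimulation_Union) (auto simp: bisimulation_Id_on[OF closed] bis bisimulation_converse)
  then have "bisimulation V Opt R0" by (simp add: R0_def Un_assoc)
  then have bis0: "bisimulation V Opt (R0\<^sup>+)" by (rule bisimulation_trancl)
  then have "R0\<^sup>+ \<subseteq> V \<times> V" unfolding bisimulation_def by blast
  moreover have "Id_on V \<subseteq> R0\<^sup>+" unfolding R0_def by auto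
  moreover have "sym (R0\<^sup>+)" by (rule sym_trancl) (auto simp: R0_def sym_def)
  ultimately have "equiv V (R0\<^sup>+)" unfolding equiv_def refl_on_def by auto
  with bis0 have "congruence_rel V Opt (R0\<^sup>+)" by (rule bisimulation_equiv_imp_congruence_rel)
  then have "R0\<^sup>+ \<subseteq> maxcong V Opt" unfolding maxcong_def by blast
  then show ?thesis unfolding R0_def by auto
qed

lemma bisimulation_maxcong:
  "\<forall>p\<in>V. Opt p \<subseteq> V \<Longrightarrow> bisimulation V Opt (maxcong V Opt)"
  unfolding maxcong_def by (rule bisimulation_Union) (simp add: congruence_rel_imp_bisimulation)

lemma equiv_maxcong:
  assumes closed: "\<forall>p\<in>V. Opt p \<subseteq> V"
  shows "equiv V (maxcong V Opt)"
proof -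
  note bis = bisimulation_maxcong[OF closed]
  have "maxcong V Opt \<subseteq> V \<times> V" using bis unfolding bisimulation_def by blast
  moreover have "Id_on V \<subseteq> maxcong V Opt"
    using bisimulation_subset_maxcong[OF closed bisimulation_Id_on[OF closed]] .
  moreover have "(maxcong V Opt)\<inverse> \<subseteq> maxcong V Opt"
    using bisimulation_subset_maxcong[OF closed bisimulation_converse[OF bis]] .
  moreover have "(maxcong V Opt)\<^sup>+ \<subseteq> maxcong V Opt"
    using bisimulation_subset_maxcong[OF closed bisimulation_trancl[OF bis]] .
  moreover have "trans (maxcong V Opt)"
    using \<open>(maxcong V Opt)\<^sup>+ \<subseteq> maxcong V Opt\<close> by (metis r_into_trancl' subrelI subset_antisym trans_trancl)
  ultimately show ?thesis
    unfolding equiv_def refl_on_def sym_def by auto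
qed

lemma congruence_rel_maxcong:
  "\<forall>p\<in>V. Opt p \<subseteq> V \<Longrightarrow> congruence_rel V Opt (maxcong V Opt)"
  by (simp add: bisimulation_equiv_imp_congruence_rel bisimulation_maxcong equiv_maxcong)

lemma og_hom_image_bisimulation:
  assumes hom: "og_hom V1 Opt1 V2 Opt2 f" and bis: "bisimulation V1 Opt1 R"
  shows "bisimulation V2 Opt2 (map_prod f f ` R)"
  unfolding bisimulation_def
proof (intro conjI allI impI)
  show "map_prod f f ` R \<subseteq> V2 \<times> V2"
    using hom bis unfolding og_hom_def bisimulation_def by blast
next
  fix a b assume "(a, b) \<in> map_prod f f ` R"
  then obtain p q where pq: "(p, q) \<in> R" and ab: "a = f p" "b = f q" by auto
  then have "p \<in> V1" "q \<in> V1" using bis unfolding bisimulation_def by auto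
  then have opts: "Opt2 a = f ` Opt1 p" "Opt2 b = f ` Opt1 q"
    using hom ab unfolding og_hom_def by auto
  have "\<forall>x\<in>Opt1 p. \<exists>y\<in>Opt1 q. (x, y) \<in> R" "\<forall>y\<in>Opt1 q. \<exists>x\<in>Opt1 p. (x, y) \<in> R"
    using pq bis unfolding bisimulation_def by blast+
  then show "\<forall>x\<in>Opt2 a. \<exists>y\<in>Opt2 b. (x, y) \<in> map_prod f f ` R"
    and "\<forall>y\<in>Opt2 b. \<exists>x\<in>Opt2 a. (x, y) \<in> map_prod f f ` R"
    unfolding opts by (blast intro: map_prod_imageI)+
qed

lemma og_hom_vimage_bisimulation:
  assumes hom: "og_hom V1 Opt1 V2 Opt2 f" and closed: "\<forall>p\<in>V1. Opt1 p \<subseteq> V1"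
    and bis: "bisimulation V2 Opt2 R"
  shows "bisimulation V1 Opt1 {(p, q) \<in> V1 \<times> V1. (f p, f q) \<in> R}"
  unfolding bisimulation_def
proof (intro conjI allI impI)
  fix p q assume "(p, q) \<in> {(p, q) \<in> V1 \<times> V1. (f p, f q) \<in> R}"
  then have pq: "p \<in> V1" "q \<in> V1" "(f p, f q) \<in> R" by auto
  then have opts: "Opt2 (f p) = f ` Opt1 p" "Opt2 (f q) = f ` Opt1 q"
    using hom unfolding og_hom_def by auto
  have "\<forall>x\<in>Opt2 (f p). \<exists>y\<in>Opt2 (f q). (x, y) \<in> R" "\<forall>y\<in>Opt2 (f q). \<exists>x\<in>Opt2 (f p). (x, y) \<in> R"
    using pq(3) bis unfolding bisimulation_def by blast+
  moreover have "Opt1 p \<subseteq> V1" "Opt1 q \<subseteq> V1" using pq closed by auto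
  ultimately show "\<forall>x\<in>Opt1 p. \<exists>y\<in>Opt1 q. (x, y) \<in> {(p, q) \<in> V1 \<times> V1. (f p, f q) \<in> R}"
    and "\<forall>y\<in>Opt1 q. \<exists>x\<in>Opt1 p. (x, y) \<in> {(p, q) \<in> V1 \<times> V1. (f p, f q) \<in> R}"
    unfolding opts by blast+
qed auto

lemma og_hom_maxcong_iff:
  assumes hom: "og_hom V1 Opt1 V2 Opt2 f"
    and closed1: "\<forall>p\<in>V1. Opt1 p \<subseteq> V1" and closed2: "\<forall>p\<in>V2. Opt2 p \<subseteq> V2"
    and "p \<in> V1" "q \<in> V1"
  shows "(f p, f q) \<in> maxcong V2 Opt2 \<longleftrightarrow> (p, q) \<in> maxcong V1 Opt1"
proof
  assume "(f p, f q) \<in> maxcong V2 Opt2"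
  moreover have "{(p, q) \<in> V1 \<times> V1. (f p, f q) \<in> maxcong V2 Opt2} \<subseteq> maxcong V1 Opt1"
    using bisimulation_subset_maxcong[OF closed1
        og_hom_vimage_bisimulation[OF hom closed1 bisimulation_maxcong[OF closed2]]] .
  ultimately show "(p, q) \<in> maxcong V1 Opt1" using \<open>p \<in> V1\<close> \<open>q \<in> V1\<close> by blast
next
  assume "(p, q) \<in> maxcong V1 Opt1"
  moreover have "map_prod f f ` maxcong V1 Opt1 \<subseteq> maxcong V2 Opt2"
    using bisimulation_subset_maxcong[OF closed2
        og_hom_image_bisimulation[OF hom bisimulation_maxcong[OF closed1]]] .
  ultimately show "(f p, f q) \<in> maxcong V2 Opt2" by force
qed

lemma quotient_eq_image_cls: "V // \<theta> = cls \<theta> ` V"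
  unfolding quotient_def cls_def by blast

lemma quot_opt_cls:
  assumes cong: "congruence_rel V Opt \<theta>" and "c \<in> V"
  shows "quot_opt Opt \<theta> (cls \<theta> c) = cls \<theta> ` Opt c"
proof -
  have "equiv V \<theta>" using cong unfolding congruence_rel_def by blast
  then have "c \<in> cls \<theta> c" using \<open>c \<in> V\<close> unfolding cls_def by (rule equiv_class_self)
  then have "(SOME s. s \<in> cls \<theta> c) \<in> cls \<theta> c" by (rule someI)
  then have "(c, SOME s. s \<in> cls \<theta> c) \<in> \<theta>" by (simp add: cls_def)
  with cong show ?thesis unfolding quot_opt_def congruence_rel_def by metis
qed

lemma og_hom_cls:
  "congruence_rel V Opt \<theta> \<Longrightarrow> og_hom V Opt (quot_pos V \<theta>) (quot_opt Opt \<theta>) (cls \<theta>)"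
  by (simp add: og_hom_def quot_pos_def quotient_eq_image_cls quot_opt_cls)

lemma quot_opt_closed:
  assumes closed: "\<forall>p\<in>V. Opt p \<subseteq> V" and cong: "congruence_rel V Opt \<theta>"
  shows "\<forall>X\<in>quot_pos V \<theta>. quot_opt Opt \<theta> X \<subseteq> quot_pos V \<theta>"
  using closed by (auto simp: quot_pos_def quotient_eq_image_cls quot_opt_cls[OF cong])

lemma og_isomorphic_quot_if_og_hom_reflects:
  assumes hom: "og_hom V1 Opt1 V2 Opt2 f" and surj: "f ` V1 = V2"
    and closed: "\<forall>p\<in>V1. Opt1 p \<subseteq> V1"
    and cong1: "congruence_rel V1 Opt1 \<theta>1" and cong2: "congruence_rel V2 Opt2 \<theta>2"
    and reflects: "\<And>p q. p \<in> V1 \<Longrightarrow> q \<in> V1 \<Longrightarrow> (f p, f q) \<in> \<theta>2 \<longleftrightarrow> (p, q) \<in> \<theta>1"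
  shows "og_isomorphic (quot_pos V1 \<theta>1) (quot_opt Opt1 \<theta>1) (quot_pos V2 \<theta>2) (quot_opt Opt2 \<theta>2)"
proof -
  have eq1: "equiv V1 \<theta>1" and eq2: "equiv V2 \<theta>2"
    using cong1 cong2 unfolding congruence_rel_def by blast+
  define g where "g X = \<theta>2 `` (f ` X)" for X
  have g_cls: "g (cls \<theta>1 p) = cls \<theta>2 (f p)" if "p \<in> V1" for p
  proof -
    have "(f p, f q) \<in> \<theta>2" if "(p, q) \<in> \<theta>1" for q
      using that reflects eq1 equiv_type by blast
    moreover have "trans \<theta>2" using eq2 by (simp add: equiv_def)
    moreover have "p \<in> cls \<theta>1 p" using eq1 \<open>p \<in> V1\<close> unfolding cls_def by (rule equiv_class_self)
    ultimately show ?thesis unfolding g_def cls_def by (blast dest: transD)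
  qed
  have "bij_betw g (V1 // \<theta>1) (V2 // \<theta>2)"
  proof (rule bij_betw_imageI)
    show "inj_on g (V1 // \<theta>1)"
    proof (rule inj_onI)
      fix X Y assume "X \<in> V1 // \<theta>1" "Y \<in> V1 // \<theta>1" "g X = g Y"
      then obtain p q where "p \<in> V1" "q \<in> V1" "X = cls \<theta>1 p" "Y = cls \<theta>1 q"
        "cls \<theta>2 (f p) = cls \<theta>2 (f q)"
        by (auto simp: quotient_eq_image_cls g_cls)
      with surj reflects eq1 eq2 show "X = Y"
        unfolding cls_def by (metis eq_equiv_class_iff image_eqI)
    qed
    show "g ` (V1 // \<theta>1) = V2 // \<theta>2"
      using surj by (auto simp: quotient_eq_image_cls g_cls image_image)
  qed
  moreover have "quot_opt Opt2 \<theta>2 (g X) = g ` quot_opt Opt1 \<theta>1 X" if "X \<in> V1 // \<theta>1" for X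
  proof -
    from that obtain p where p: "p \<in> V1" "X = cls \<theta>1 p" by (auto simp: quotient_eq_image_cls)
    have "f p \<in> V2" using p surj by blast
    then have "quot_opt Opt2 \<theta>2 (g X) = cls \<theta>2 ` f ` Opt1 p"
      using p hom by (simp add: g_cls quot_opt_cls[OF cong2] og_hom_def)
    also have "\<dots> = g ` cls \<theta>1 ` Opt1 p"
      using p closed by (simp add: image_image g_cls subset_iff cong: image_cong)
    finally show ?thesis using p by (simp add: quot_opt_cls[OF cong1])
  qed
  ultimately show ?thesis
    unfolding og_isomorphic_def og_iso_def quot_pos_def by blast
qed

lemma og_isomorphic_quot_maxcong:
  assumes hom: "og_hom V1 Opt1 V2 Opt2 f" and surj: "f ` V1 = V2"
    and closed1: "\<forall>p\<in>V1. Opt1 p \<subseteq> V1" and closed2: "\<forall>p\<in>V2. Opt2 p \<subseteq> V2"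
  shows "og_isomorphic (quot_pos V1 (maxcong V1 Opt1)) (quot_opt Opt1 (maxcong V1 Opt1))
           (quot_pos V2 (maxcong V2 Opt2)) (quot_opt Opt2 (maxcong V2 Opt2))"
  using og_isomorphic_quot_if_og_hom_reflects[OF hom surj closed1
      congruence_rel_maxcong[OF closed1] congruence_rel_maxcong[OF closed2]]
    og_hom_maxcong_iff[OF hom closed1 closed2] by blast

lemma sum_opt_closed:
  "\<forall>p\<in>C. OptC p \<subseteq> C \<Longrightarrow> \<forall>q\<in>D. OptD q \<subseteq> D \<Longrightarrow>
    \<forall>pq\<in>sum_pos C D. sum_opt OptC OptD pq \<subseteq> sum_pos C D"
  unfolding sum_pos_def sum_opt_def by fastforce

lemma og_hom_sum:
  assumes "og_hom C OptC C' OptC' f" and "og_hom D OptD D' OptD' g"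
  shows "og_hom (sum_pos C D) (sum_opt OptC OptD) (sum_pos C' D') (sum_opt OptC' OptD') (map_prod f g)"
  using assms unfolding og_hom_def sum_pos_def sum_opt_def
  by (auto simp: image_Un map_prod_surj_on)

theorem mainTheorem20:
  fixes C :: "'a set" and OptC :: "'a \<Rightarrow> 'a set"
    and D :: "'b set" and OptD :: "'b \<Rightarrow> 'b set"
  assumes "optiongraph C OptC" and "optiongraph D OptD"
  defines "S \<equiv> sum_pos C D" and "OptS \<equiv> sum_opt OptC OptD"
  defines "Cq \<equiv> quot_pos C (maxcong C OptC)" and "OptCq \<equiv> quot_opt OptC (maxcong C OptC)"
  defines "Dq \<equiv> quot_pos D (maxcong D OptD)" and "OptDq \<equiv> quot_opt OptD (maxcong D OptD)"
  defines "E \<equiv> sum_pos Cq Dq" and "OptE \<equiv> sum_opt OptCq OptDq"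
  shows "og_isomorphic
           (quot_pos S (maxcong S OptS)) (quot_opt OptS (maxcong S OptS))
           (quot_pos E (maxcong E OptE)) (quot_opt OptE (maxcong E OptE))"
proof (rule og_isomorphic_quot_maxcong)
  have closedC: "\<forall>p\<in>C. OptC p \<subseteq> C" and closedD: "\<forall>q\<in>D. OptD q \<subseteq> D"
    using assms(1,2) unfolding optiongraph_def by auto
  note congC = congruence_rel_maxcong[OF closedC] and congD = congruence_rel_maxcong[OF closedD]
  let ?f = "map_prod (cls (maxcong C OptC)) (cls (maxcong D OptD))"
  show "og_hom S OptS E OptE ?f"
    unfolding S_def OptS_def E_def OptE_def Cq_def OptCq_def Dq_def OptDq_def
    by (intro og_hom_sum og_hom_cls congC congD)
  show "?f ` S = E"
    by (simp add: S_def E_def sum_pos_def Cq_def Dq_def quot_pos_def quotient_eq_image_cls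
        map_prod_surj_on)
  show "\<forall>p\<in>S. OptS p \<subseteq> S"
    unfolding S_def OptS_def using sum_opt_closed[OF closedC closedD] .
  show "\<forall>p\<in>E. OptE p \<subseteq> E"
    unfolding E_def OptE_def Cq_def OptCq_def Dq_def OptDq_def
    by (intro sum_opt_closed quot_opt_closed closedC closedD congC congD)
qed

end
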